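(* Let $r_0>0$, $R_c>0$, $D>0$. Let $H\subset[0,D]$ be a finite set (helper positions) and $V\subset\mathbb{R}$ a finite set (VoI positions), with $H\cap V=\emptyset$. Call a finite set of pairs $\{(h_1,v_1),\dots,(h_n,v_n)\}$ a \emph{feasible schedule} if the $h_j\in H$ are pairwise distinct, the $v_j\in V$ are pairwise distinct, $|h_j-v_j|\le r_0$ for every $j$, and $|h_i-h_j|\ge R_c$ for all $i\neq j$. Define the greedy schedule as follows. Let $g_1$ be the smallest $x\in H$ such that $[x-r_0,x+r_0]\cap V\neq\emptyset$, and let $u_1$ be the smallest element of $[g_1-r_0,g_1+r_0]\cap V$. Having defined $(g_1,u_1),\dots,(g_k,u_k)$, let $g_{k+1}$ be the smallest $x\in H$ with $x\ge g_k+R_c$ such that $[x-r_0,x+r_0]$ contains an element of $V\setminus\{u_1,\dots,u_k\}$, and let $u_{k+1}$ be the smallest element of $([g_{k+1}-r_0,g_{k+1}+r_0]\cap V)\setminus\{u_1,\dots,u_k\}$. Stop when no such $x$ exists (or when no $g_1$ exists, in which case the greedy schedule is empty). Then the greedy schedule $\{(g_1,u_1),\dots,(g_N,u_N)\}$ is a feasible schedule, and every feasible schedule has at most $N$ pairs.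
   Context: This models a stretch of road (a line) between infrastructure points: "helpers" are vehicles that may transmit, VoIs (vehicles of interest) are receivers, $r_0$ is the vehicle radio range and $R_c$ is the carrier-sensing range, so simultaneously transmitting helpers must be at mutual distance at least $R_c$, each transmitter sends to one VoI within distance $r_0$, and each VoI receives from at most one helper. *)

theory Defs
  imports Complex_Main
begin

definition is_least_el :: "(real \<Rightarrow> bool) \<Rightarrow> real \<Rightarrow> bool" where
  "is_least_el P x \<longleftrightarrow> P x \<and> (\<forall>y. P y \<longrightarrow> x \<le> y)"

definition feasible_schedule ::
  "real set \<Rightarrow> real set \<Rightarrow> real \<Rightarrow> real \<Rightarrow> (real \<times> real) set \<Rightarrow> bool" where
  "feasible_schedule H V r0 Rc S \<longleftrightarrow>
     finite S \<and> fst ` S \<subseteq> H \<and> snd ` S \<subseteq> V \<and>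
     inj_on fst S \<and> inj_on snd S \<and>
     (\<forall>p\<in>S. \<bar>fst p - snd p\<bar> \<le> r0) \<and>
     (\<forall>p\<in>S. \<forall>q\<in>S. p \<noteq> q \<longrightarrow> \<bar>fst p - fst q\<bar> \<ge> Rc)"

definition greedy_cand ::
  "real set \<Rightarrow> real set \<Rightarrow> real \<Rightarrow> real \<Rightarrow> (real \<times> real) list \<Rightarrow> real \<Rightarrow> bool" where
  "greedy_cand H V r0 Rc prev x \<longleftrightarrow>
     x \<in> H \<and> (prev = [] \<or> x \<ge> fst (last prev) + Rc) \<and>
     (\<exists>v\<in>V - snd ` set prev. \<bar>x - v\<bar> \<le> r0)"

definition is_greedy_schedule ::
  "real set \<Rightarrow> real set \<Rightarrow> real \<Rightarrow> real \<Rightarrow> (real \<times> real) list \<Rightarrow> bool" where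
  "is_greedy_schedule H V r0 Rc gs \<longleftrightarrow>
     (\<forall>k < length gs.
        is_least_el (greedy_cand H V r0 Rc (take k gs)) (fst (gs ! k)) \<and>
        is_least_el (\<lambda>v. v \<in> V - snd ` set (take k gs) \<and> \<bar>fst (gs ! k) - v\<bar> \<le> r0)
                    (snd (gs ! k))) \<and>
     \<not> (\<exists>x. greedy_cand H V r0 Rc gs x)"

end

theory Submission
  imports Defs
begin

text \<open>Feasibility of the greedy schedule is read off its construction: consecutive helpers
  are at least \<open>Rc\<close> apart and every step takes a fresh VoI. Optimality is an exchange
  argument. Let \<open>S\<close> be feasible and fit after the first \<open>k\<close> greedy pairs, and let \<open>(h, v)\<close> be
  its leftmost pair. Then \<open>h\<close> is a candidate for the next greedy pair \<open>(g, u)\<close>, so \<open>g \<le> h\<close>,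
  and therefore \<open>u \<le> v\<close>. Dropping \<open>(h, v)\<close> and giving \<open>v\<close> to the pair of \<open>S\<close> that used \<open>u\<close>
  leaves a feasible schedule with one pair fewer that fits after the first \<open>k + 1\<close> greedy
  pairs. Nothing fits after the complete greedy schedule, since it would yield a further
  candidate, so \<open>S\<close> has at most as many pairs as the greedy schedule.\<close>

definition greedy_prefix ::
  "real set \<Rightarrow> real set \<Rightarrow> real \<Rightarrow> real \<Rightarrow> (real \<times> real) list \<Rightarrow> bool" where
  "greedy_prefix H V r0 Rc gs \<longleftrightarrow>
     (\<forall>k < length gs.
        is_least_el (greedy_cand H V r0 Rc (take k gs)) (fst (gs ! k)) \<and>
        is_least_el (\<lambda>v. v \<in> V - snd ` set (take k gs) \<and> \<bar>fst (gs ! k) - v\<bar> \<le> r0)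
                    (snd (gs ! k)))"

lemma is_greedy_schedule_iff:
  "is_greedy_schedule H V r0 Rc gs \<longleftrightarrow>
     greedy_prefix H V r0 Rc gs \<and> \<not> (\<exists>x. greedy_cand H V r0 Rc gs x)"
  unfolding is_greedy_schedule_def greedy_prefix_def ..

lemma is_least_el_Min:
  assumes "finite {x. P x}" "P x"
  shows "is_least_el P (Min {x. P x})"
  using assms Min_in[of "{x. P x}"] unfolding is_least_el_def by auto

lemma greedy_prefix_snoc:
  assumes "greedy_prefix H V r0 Rc gs"
    and "is_least_el (greedy_cand H V r0 Rc gs) g"
    and "is_least_el (\<lambda>v. v \<in> V - snd ` set gs \<and> \<bar>g - v\<bar> \<le> r0) u"
  shows "greedy_prefix H V r0 Rc (gs @ [(g, u)])"
  using assms unfolding greedy_prefix_def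
  by (auto simp: nth_append less_Suc_eq)

lemma greedy_prefix_extends_to_schedule:
  assumes "finite H" "finite V" "greedy_prefix H V r0 Rc prev"
  shows "\<exists>gs. is_greedy_schedule H V r0 Rc gs"
  using assms(3)
proof (induction "card (V - snd ` set prev)" arbitrary: prev rule: less_induct)
  case less
  show ?case
  proof (cases "\<exists>x. greedy_cand H V r0 Rc prev x")
    case False
    with less.prems show ?thesis by (auto simp: is_greedy_schedule_iff)
  next
    case True
    then obtain x where x: "greedy_cand H V r0 Rc prev x" ..
    define g where "g = Min {x. greedy_cand H V r0 Rc prev x}"
    define U where "U = (\<lambda>v. v \<in> V - snd ` set prev \<and> \<bar>g - v\<bar> \<le> r0)"
    have least_g: "is_least_el (greedy_cand H V r0 Rc prev) g"
      unfolding g_def using x \<open>finite H\<close>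
      by (intro is_least_el_Min) (auto simp: greedy_cand_def elim: rev_finite_subset)
    then obtain v where "U v"
      unfolding is_least_el_def greedy_cand_def U_def by blast
    then have least_u: "is_least_el U (Min {v. U v})"
      using \<open>finite V\<close> by (intro is_least_el_Min) (auto simp: U_def elim: rev_finite_subset)
    define prev' where "prev' = prev @ [(g, Min {v. U v})]"
    have "greedy_prefix H V r0 Rc prev'"
      unfolding prev'_def
      by (rule greedy_prefix_snoc[OF less.prems least_g]) (use least_u in \<open>simp only: U_def\<close>)
    moreover have "V - snd ` set prev' \<subset> V - snd ` set prev"
      using least_u unfolding prev'_def is_least_el_def U_def by auto
    then have "card (V - snd ` set prev') < card (V - snd ` set prev)"
      using \<open>finite V\<close> by (intro psubset_card_mono) auto
    ultimately show ?thesis using less.hyps by blast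
  qed
qed

lemma greedy_schedule_exists:
  assumes "finite H" "finite V"
  shows "\<exists>gs. is_greedy_schedule H V r0 Rc gs"
  using greedy_prefix_extends_to_schedule[OF assms, of r0 Rc "[]"]
  by (simp add: greedy_prefix_def)

lemma greedy_schedule_nth:
  assumes "is_greedy_schedule H V r0 Rc gs" "k < length gs"
  shows "greedy_cand H V r0 Rc (take k gs) (fst (gs ! k))"
    and "\<And>x. greedy_cand H V r0 Rc (take k gs) x \<Longrightarrow> fst (gs ! k) \<le> x"
    and "snd (gs ! k) \<in> V - snd ` set (take k gs)"
    and "\<bar>fst (gs ! k) - snd (gs ! k)\<bar> \<le> r0"
    and "\<And>v. v \<in> V - snd ` set (take k gs) \<Longrightarrow> \<bar>fst (gs ! k) - v\<bar> \<le> r0 \<Longrightarrow> snd (gs ! k) \<le> v"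
  using assms unfolding is_greedy_schedule_def is_least_el_def by blast+

lemma greedy_schedule_helpers_sorted:
  assumes G: "is_greedy_schedule H V r0 Rc gs" and "Rc \<ge> 0"
  shows "sorted_wrt (\<lambda>p q. fst p + Rc \<le> fst q) gs"
proof -
  have "transp (\<lambda>p q :: real \<times> real. fst p + Rc \<le> fst q)"
    using \<open>Rc \<ge> 0\<close> by (auto intro: transpI)
  moreover have "fst (gs ! k) + Rc \<le> fst (gs ! Suc k)" if "Suc k < length gs" for k
    using greedy_schedule_nth(1)[OF G that] that
    by (simp add: greedy_cand_def take_Suc_conv_app_nth)
  ultimately show ?thesis by (simp add: sorted_wrt_iff_nth_Suc_transp)
qed

lemma greedy_schedule_distinct_snd:
  assumes G: "is_greedy_schedule H V r0 Rc gs"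
  shows "distinct (map snd gs)"
proof -
  have earlier: "snd (gs ! i) \<noteq> snd (gs ! j)" if "i < j" "j < length gs" for i j
  proof -
    have "take j gs ! i \<in> set (take j gs)"
      using that by (intro nth_mem) simp
    then have "gs ! i \<in> set (take j gs)"
      using that by simp
    then have "snd (gs ! i) \<in> snd ` set (take j gs)"
      by (rule imageI)
    then show ?thesis
      using greedy_schedule_nth(3)[OF G that(2)] by (metis DiffD2)
  qed
  show ?thesis
    unfolding distinct_conv_nth
  proof (intro allI impI)
    fix i j assume "i < length (map snd gs)" "j < length (map snd gs)" "i \<noteq> j"
    then show "map snd gs ! i \<noteq> map snd gs ! j"
      using earlier[of i j] earlier[of j i] by (cases "i < j") auto
  qed
qed

lemma greedy_schedule_feasible:
  assumes G: "is_greedy_schedule H V r0 Rc gs" and "Rc > 0"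
  shows "feasible_schedule H V r0 Rc (set gs)" and "distinct gs"
proof -
  have order: "fst (gs ! i) + Rc \<le> fst (gs ! j)" if "i < j" "j < length gs" for i j
    using greedy_schedule_helpers_sorted[OF G less_imp_le[OF \<open>Rc > 0\<close>]] that
    by (rule sorted_wrt_nth_less)
  have sep: "Rc \<le> \<bar>fst p - fst q\<bar>" if "p \<in> set gs" "q \<in> set gs" "p \<noteq> q" for p q
  proof -
    obtain i where i: "i < length gs" "p = gs ! i"
      using \<open>p \<in> set gs\<close> by (auto simp: in_set_conv_nth)
    obtain j where j: "j < length gs" "q = gs ! j"
      using \<open>q \<in> set gs\<close> by (auto simp: in_set_conv_nth)
    from i j \<open>p \<noteq> q\<close> have "i \<noteq> j" by auto
    then have "i < j \<or> j < i" by arith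
    then show ?thesis
      using order[of i j] order[of j i] i j by auto
  qed
  have "inj_on fst (set gs)"
    using sep \<open>Rc > 0\<close> by (force intro: inj_onI)
  moreover have "inj_on snd (set gs)" and "distinct gs"
    using greedy_schedule_distinct_snd[OF G] by (simp_all add: distinct_map)
  moreover have "fst p \<in> H \<and> snd p \<in> V \<and> \<bar>fst p - snd p\<bar> \<le> r0" if "p \<in> set gs" for p
  proof -
    obtain k where "k < length gs" "p = gs ! k"
      using \<open>p \<in> set gs\<close> by (auto simp: in_set_conv_nth)
    then show ?thesis
      using greedy_schedule_nth(1,3,4)[OF G] by (auto simp: greedy_cand_def)
  qed
  ultimately show "feasible_schedule H V r0 Rc (set gs)" "distinct gs"
    unfolding feasible_schedule_def using sep by auto
qed

lemma feasible_schedule_subset: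
  assumes "feasible_schedule H V r0 Rc S" and sub: "T \<subseteq> S"
  shows "feasible_schedule H V r0 Rc T"
proof -
  have fin: "finite S" and HS: "fst ` S \<subseteq> H" and VS: "snd ` S \<subseteq> V"
    and injf: "inj_on fst S" and injs: "inj_on snd S"
    and dist: "\<forall>p\<in>S. \<bar>fst p - snd p\<bar> \<le> r0"
    and sep: "\<forall>p\<in>S. \<forall>q\<in>S. p \<noteq> q \<longrightarrow> Rc \<le> \<bar>fst p - fst q\<bar>"
    using assms(1) unfolding feasible_schedule_def by auto
  show ?thesis
    unfolding feasible_schedule_def
  proof (intro conjI)
    show "finite T" using sub fin by (rule finite_subset)
    show "fst ` T \<subseteq> H" using image_mono[OF sub] HS by (rule subset_trans)
    show "snd ` T \<subseteq> V" using image_mono[OF sub] VS by (rule subset_trans)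
    show "inj_on fst T" using injf sub by (rule inj_on_subset)
    show "inj_on snd T" using injs sub by (rule inj_on_subset)
    show "\<forall>p\<in>T. \<bar>fst p - snd p\<bar> \<le> r0" using dist sub by blast
    show "\<forall>p\<in>T. \<forall>q\<in>T. p \<noteq> q \<longrightarrow> Rc \<le> \<bar>fst p - fst q\<bar>" using sep sub by blast
  qed
qed

definition redirect_voi :: "real \<Rightarrow> real \<Rightarrow> real \<times> real \<Rightarrow> real \<times> real" where
  "redirect_voi u v p = (if snd p = u then (fst p, v) else p)"

lemma fst_redirect_voi [simp]: "fst (redirect_voi u v p) = fst p"
  by (simp add: redirect_voi_def)

lemma inj_on_snd_redirect_voi:
  assumes injs: "inj_on snd T" and "v \<notin> snd ` T"
  shows "inj_on snd (redirect_voi u v ` T)"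
proof -
  have "inj_on (snd \<circ> redirect_voi u v) T"
  proof (rule inj_onI)
    fix a b assume ab: "a \<in> T" "b \<in> T" "(snd \<circ> redirect_voi u v) a = (snd \<circ> redirect_voi u v) b"
    then have "snd a = snd b"
      using \<open>v \<notin> snd ` T\<close> by (auto simp: redirect_voi_def split: if_splits)
    then show "a = b" using inj_onD[OF injs] ab by blast
  qed
  then show ?thesis by (rule inj_on_imageI)
qed

lemma feasible_schedule_redirect_voi:
  assumes F: "feasible_schedule H V r0 Rc T" and "v \<in> V" "v \<notin> snd ` T"
    and near: "\<forall>p\<in>T. snd p = u \<longrightarrow> \<bar>fst p - v\<bar> \<le> r0"
  shows "feasible_schedule H V r0 Rc (redirect_voi u v ` T)"
    and "card (redirect_voi u v ` T) = card T"
    and "fst ` redirect_voi u v ` T = fst ` T"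
    and "snd ` redirect_voi u v ` T \<subseteq> insert v (snd ` T) - {u}"
proof -
  have fin: "finite T" and HT: "fst ` T \<subseteq> H" and VT: "snd ` T \<subseteq> V"
    and injf: "inj_on fst T" and injs: "inj_on snd T"
    and dist: "\<forall>p\<in>T. \<bar>fst p - snd p\<bar> \<le> r0"
    and sep: "\<forall>p\<in>T. \<forall>q\<in>T. p \<noteq> q \<longrightarrow> Rc \<le> \<bar>fst p - fst q\<bar>"
    using F unfolding feasible_schedule_def by auto
  have inj: "inj_on (redirect_voi u v) T"
    by (rule inj_on_imageI2[of fst]) (simp add: comp_def injf)
  show fst_img: "fst ` redirect_voi u v ` T = fst ` T"
    by (simp add: image_image)
  show snd_img: "snd ` redirect_voi u v ` T \<subseteq> insert v (snd ` T) - {u}"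
    using \<open>v \<notin> snd ` T\<close> by (auto simp: redirect_voi_def image_iff)
  show "card (redirect_voi u v ` T) = card T"
    using inj by (rule card_image)
  have "inj_on snd (redirect_voi u v ` T)"
    using injs \<open>v \<notin> snd ` T\<close> by (rule inj_on_snd_redirect_voi)
  moreover have "inj_on fst (redirect_voi u v ` T)"
    using injf by (intro inj_on_imageI) (simp add: comp_def)
  moreover have "\<forall>q\<in>redirect_voi u v ` T. \<bar>fst q - snd q\<bar> \<le> r0"
    using dist near by (auto simp: redirect_voi_def)
  moreover have "\<forall>p\<in>redirect_voi u v ` T. \<forall>q\<in>redirect_voi u v ` T.
      p \<noteq> q \<longrightarrow> Rc \<le> \<bar>fst p - fst q\<bar>"
  proof (intro ballI impI)
    fix p q assume "p \<in> redirect_voi u v ` T" "q \<in> redirect_voi u v ` T" "p \<noteq> q"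
    then obtain a b where "a \<in> T" "b \<in> T" "p = redirect_voi u v a" "q = redirect_voi u v b"
      by blast
    with \<open>p \<noteq> q\<close> sep show "Rc \<le> \<bar>fst p - fst q\<bar>" by auto
  qed
  moreover have "fst ` redirect_voi u v ` T \<subseteq> H"
    using HT fst_img by simp
  moreover have "snd ` redirect_voi u v ` T \<subseteq> V"
    by (rule subset_trans[OF snd_img]) (use VT \<open>v \<in> V\<close> in auto)
  moreover have "finite (redirect_voi u v ` T)"
    using fin by simp
  ultimately show "feasible_schedule H V r0 Rc (redirect_voi u v ` T)"
    unfolding feasible_schedule_def by (intro conjI) assumption+
qed

text \<open>The exchange step: drop the leftmost pair \<open>(h, v)\<close> and hand \<open>v\<close> to the pair that
  used \<open>u\<close>, which stays in range because \<open>u \<le> v\<close> and its helper lies right of \<open>h\<close>.\<close>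
lemma feasible_schedule_exchange:
  assumes F: "feasible_schedule H V r0 Rc S"
    and hv: "(h, v) \<in> S" and h_min: "\<forall>p\<in>S. h \<le> fst p" and "u \<le> v"
  obtains S' where "feasible_schedule H V r0 Rc S'" "card S' = card S - 1"
    "fst ` S' = fst ` S - {h}" "snd ` S' \<subseteq> snd ` S - {u}"
proof -
  define T where "T = S - {(h, v)}"
  have injf: "inj_on fst S" and injs: "inj_on snd S" and "v \<in> V"
    and dist: "\<forall>p\<in>S. \<bar>fst p - snd p\<bar> \<le> r0"
    using F hv unfolding feasible_schedule_def by auto
  have h_unused: "fst p \<noteq> h" and v_unused: "snd p \<noteq> v" if "p \<in> T" for p
    using that hv inj_onD[OF injf, of p "(h, v)"] inj_onD[OF injs, of p "(h, v)"]
    by (auto simp: T_def)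
  have FT: "feasible_schedule H V r0 Rc T"
    using F by (rule feasible_schedule_subset) (auto simp: T_def)
  have near: "\<forall>p\<in>T. snd p = u \<longrightarrow> \<bar>fst p - v\<bar> \<le> r0"
  proof (intro ballI impI)
    fix p assume "p \<in> T" "snd p = u"
    then have "p \<in> S" by (simp add: T_def)
    then have "h \<le> fst p" "\<bar>fst p - u\<bar> \<le> r0" "\<bar>h - v\<bar> \<le> r0"
      using \<open>snd p = u\<close> h_min dist hv by auto
    with \<open>u \<le> v\<close> show "\<bar>fst p - v\<bar> \<le> r0" by (simp add: abs_le_iff)
  qed
  have "v \<notin> snd ` T"
    using v_unused by blast
  note redirect = feasible_schedule_redirect_voi[OF FT \<open>v \<in> V\<close> this near]
  show ?thesis
  proof (rule that[OF redirect(1)])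
    show "card (redirect_voi u v ` T) = card S - 1"
      using redirect(2) card_Diff_singleton[OF hv] by (simp add: T_def)
    show "fst ` redirect_voi u v ` T = fst ` S - {h}"
      unfolding redirect(3) using h_unused hv by (auto simp: T_def image_iff)
    have "insert v (snd ` T) \<subseteq> snd ` S"
      using image_eqI[OF _ hv, of v snd] by (auto simp: T_def)
    then show "snd ` redirect_voi u v ` T \<subseteq> snd ` S - {u}"
      using redirect(4) by blast
  qed
qed

lemma feasible_schedule_leftmost_gap:
  assumes "feasible_schedule H V r0 Rc S" "(h, v) \<in> S" "\<forall>p\<in>S. h \<le> fst p"
    and "x \<in> fst ` S - {h}"
  shows "h + Rc \<le> x"
proof -
  obtain q where q: "q \<in> S" "x = fst q" "fst q \<noteq> h"
    using assms(4) by auto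
  then have "q \<noteq> (h, v)" by auto
  then have "Rc \<le> \<bar>fst q - fst (h, v)\<bar>"
    using assms(1,2) q(1) unfolding feasible_schedule_def by blast
  then show ?thesis using assms(3) q by simp
qed

definition fits_after :: "real \<Rightarrow> (real \<times> real) list \<Rightarrow> (real \<times> real) set \<Rightarrow> bool" where
  "fits_after Rc prev S \<longleftrightarrow>
     (\<forall>p\<in>S. (prev = [] \<or> fst (last prev) + Rc \<le> fst p) \<and> snd p \<notin> snd ` set prev)"

lemma greedy_cand_if_fits_after:
  assumes "feasible_schedule H V r0 Rc S" "fits_after Rc prev S" "p \<in> S"
  shows "greedy_cand H V r0 Rc prev (fst p)"
  using assms unfolding feasible_schedule_def fits_after_def greedy_cand_def by blast

lemma greedy_choice_le_leftmost:
  assumes G: "is_greedy_schedule H V r0 Rc gs" and k: "k < length gs"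
    and F: "feasible_schedule H V r0 Rc S" and fits: "fits_after Rc (take k gs) S"
    and hv: "(h, v) \<in> S"
  shows "fst (gs ! k) \<le> h" and "snd (gs ! k) \<le> v"
proof -
  show g_le: "fst (gs ! k) \<le> h"
    using greedy_schedule_nth(2)[OF G k greedy_cand_if_fits_after[OF F fits hv]] by simp
  have "v \<in> V" and hv_dist: "\<bar>h - v\<bar> \<le> r0"
    using F hv unfolding feasible_schedule_def by force+
  moreover have "v \<notin> snd ` set (take k gs)"
    using fits hv unfolding fits_after_def by force
  ultimately have v_free: "v \<in> V - snd ` set (take k gs)" by blast
  show "snd (gs ! k) \<le> v"
  proof (cases "v \<le> fst (gs ! k) + r0")
    case True
    with g_le hv_dist have "\<bar>fst (gs ! k) - v\<bar> \<le> r0" by (simp add: abs_le_iff)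
    then show ?thesis using greedy_schedule_nth(5)[OF G k v_free] by simp
  next
    case False
    then show ?thesis using greedy_schedule_nth(4)[OF G k] by (simp add: abs_le_iff)
  qed
qed

lemma fits_after_snoc:
  assumes "fits_after Rc prev S"
    and "fst ` S' \<subseteq> {fst x + Rc..}" "snd ` S' \<subseteq> snd ` S - {snd x}"
  shows "fits_after Rc (prev @ [x]) S'"
  unfolding fits_after_def
proof
  fix p assume "p \<in> S'"
  then have "snd p \<in> snd ` S - {snd x}"
    using assms(3) by blast
  then obtain q where q: "q \<in> S" "snd q = snd p" and "snd p \<noteq> snd x"
    by (auto elim: imageE)
  moreover have "snd q \<notin> snd ` set prev"
    using assms(1) q(1) unfolding fits_after_def by blast
  moreover have "fst x + Rc \<le> fst p"
    using assms(2) \<open>p \<in> S'\<close> by auto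
  ultimately show "(prev @ [x] = [] \<or> fst (last (prev @ [x])) + Rc \<le> fst p) \<and>
      snd p \<notin> snd ` set (prev @ [x])"
    by auto
qed

lemma greedy_schedule_nothing_fits_after:
  assumes "is_greedy_schedule H V r0 Rc gs"
    and "feasible_schedule H V r0 Rc S" "fits_after Rc gs S"
  shows "S = {}"
  using assms greedy_cand_if_fits_after[OF assms(2,3)]
  by (auto simp: is_greedy_schedule_iff)

lemma greedy_schedule_dominates_fitting:
  assumes G: "is_greedy_schedule H V r0 Rc gs"
    and "feasible_schedule H V r0 Rc S" "k \<le> length gs" "fits_after Rc (take k gs) S"
  shows "card S \<le> length gs - k"
  using assms(2-)
proof (induction "card S" arbitrary: S k)
  case 0
  then show ?case by simp
next
  case (Suc n)
  then have "finite S" "S \<noteq> {}" by (auto simp: feasible_schedule_def)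
  define h where "h = Min (fst ` S)"
  have h_min: "\<forall>p\<in>S. h \<le> fst p"
    using \<open>finite S\<close> by (simp add: h_def)
  have "h \<in> fst ` S"
    using \<open>finite S\<close> \<open>S \<noteq> {}\<close> by (simp add: h_def)
  then obtain v where hv: "(h, v) \<in> S" by force
  have k: "k < length gs"
    using greedy_schedule_nothing_fits_after[OF G Suc.prems(1)] Suc.prems(2,3) \<open>S \<noteq> {}\<close>
    by (cases "k = length gs") auto
  note le = greedy_choice_le_leftmost[OF G k Suc.prems(1,3) hv]
  obtain S' where F': "feasible_schedule H V r0 Rc S'" and card': "card S' = card S - 1"
    and fst': "fst ` S' = fst ` S - {h}" and snd': "snd ` S' \<subseteq> snd ` S - {snd (gs ! k)}"
    using feasible_schedule_exchange[OF Suc.prems(1) hv h_min le(2)] .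
  have "fst ` S' \<subseteq> {fst (gs ! k) + Rc..}"
    using feasible_schedule_leftmost_gap[OF Suc.prems(1) hv h_min] le(1)
    unfolding fst' by fastforce
  with Suc.prems(3) have "fits_after Rc (take (Suc k) gs) S'"
    unfolding take_Suc_conv_app_nth[OF k] using snd' by (rule fits_after_snoc)
  then have "card S' \<le> length gs - Suc k"
    using Suc.hyps(1)[of S' "Suc k"] Suc.hyps(2) F' card' k by simp
  with card' Suc.hyps(2) k show ?case by simp
qed

theorem theorem2:
  fixes r0 Rc D :: real and H V :: "real set"
  assumes "r0 > 0" "Rc > 0" "D > 0"
    and "finite H" "H \<subseteq> {0..D}" "finite V" "H \<inter> V = {}"
  shows "(\<exists>gs. is_greedy_schedule H V r0 Rc gs) \<and>
         (\<forall>gs. is_greedy_schedule H V r0 Rc gs \<longrightarrow>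
            feasible_schedule H V r0 Rc (set gs) \<and> card (set gs) = length gs \<and>
            (\<forall>S. feasible_schedule H V r0 Rc S \<longrightarrow> card S \<le> length gs))"
proof (intro conjI allI impI)
  show "\<exists>gs. is_greedy_schedule H V r0 Rc gs"
    using greedy_schedule_exists[OF \<open>finite H\<close> \<open>finite V\<close>] .
next
  fix gs assume G: "is_greedy_schedule H V r0 Rc gs"
  show "feasible_schedule H V r0 Rc (set gs)"
    using greedy_schedule_feasible(1)[OF G \<open>Rc > 0\<close>] .
  show "card (set gs) = length gs"
    using greedy_schedule_feasible(2)[OF G \<open>Rc > 0\<close>] by (rule distinct_card)
  show "card S \<le> length gs" if "feasible_schedule H V r0 Rc S" for S
    using greedy_schedule_dominates_fitting[OF G that, of 0] by (simp add: fits_after_def)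
qed

end
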